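(* Let $(b_n)_{n\ge 0}$ and $(p_{2n})_{n\ge 1}$ be sequences of non-negative integers, not all $p_{2n}$ zero, and let $$V(x)=\sum_{n=0}^\infty b_n x^n,\qquad U(x)=\sum_{n=1}^\infty p_{2n}x^n$$ have radii of convergence $x_V$ and $x_U$ respectively, where $0<x_U<x_V\le 1$ and $\lim_{x\to x_V^-}V(x)=\infty$. Write $U(x_U^-)=\lim_{x\to x_U^-}U(x)$ and $U'(x_U^-)=\lim_{x\to x_U^-}U'(x)$ (values in $(0,\infty]$). For $w\ge1$ let $x_c(w)$ be the radius of convergence in $x$ of $Z(x,w)=V(wx)/(1-U(x)V(wx))$, let $f(w)=-\log x_c(w)$, and let $\theta(w)=w\,f'(w)$ wherever $f$ is differentiable. (i) If $U(x_U^-)=\infty$ or $U(x_U^-)V(x_U)\ge 1$, the model has no phase transition at finite temperature, i.e. $f$ is real-analytic on $(1,\infty)$. (ii) Suppose $U(x_U^-)<\infty$ and $U(x_U^-)V(x_U)<1$, and let $w_c>1$ be defined by $U(x_U^-)V(w_cx_U)=1$. Then $\theta(w)=0$ for $1<w<w_c$ and $\theta(w)>0$ for $w>w_c$. If moreover $U'(x_U^-)=\infty$, then $\theta(w)\to0$ as $w\to w_c^+$ (a continuous phase transition at $w_c$); if $U'(x_U^-)<\infty$, then $\theta(w)\to\theta_c$ for some $\theta_c>0$ as $w\to w_c^+$ (a first order phase transition at $w_c$).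
   Context: This is the Poland–Scheraga model of DNA denaturation: $b_n$ counts paths of length $n$, $p_{2n}$ counts marked loops of length $2n$, $w=e^{-E/kT}\ge1$ is a Boltzmann factor, $f$ is the free energy and $\theta(w)=w\,df/dw$ is the fraction of shared bonds. A phase transition at $w_c$ is called continuous if $\theta$ is continuous at $w_c$ (tends to $0$ from above) and first order if $\theta$ jumps at $w_c$. *)

theory Defs
  imports "HOL-Analysis.Analysis"
begin

definition real_analytic_on :: "(real \<Rightarrow> real) \<Rightarrow> real set \<Rightarrow> bool" where
  "real_analytic_on f S \<longleftrightarrow>
     (\<forall>x\<in>S. \<exists>r>0. \<exists>a::nat \<Rightarrow> real. \<forall>y. \<bar>y - x\<bar> < r \<longrightarrow> (\<lambda>n. a n * (y - x) ^ n) sums f y)"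

text \<open>Coefficients of U: p n stands for p_{2n}, n >= 1; the constant term is 0.\<close>
definition U_coeff :: "(nat \<Rightarrow> nat) \<Rightarrow> nat \<Rightarrow> real" where
  "U_coeff p n = (if n = 0 then 0 else real (p n))"

definition PS_V :: "(nat \<Rightarrow> nat) \<Rightarrow> real \<Rightarrow> real" where
  "PS_V b x = (\<Sum>n. real (b n) * x ^ n)"

definition PS_U :: "(nat \<Rightarrow> nat) \<Rightarrow> real \<Rightarrow> real" where
  "PS_U p x = (\<Sum>n. U_coeff p n * x ^ n)"

definition Z_fps :: "(nat \<Rightarrow> nat) \<Rightarrow> (nat \<Rightarrow> nat) \<Rightarrow> real \<Rightarrow> real fps" where
  "Z_fps b p w =
     (let Vw = Abs_fps (\<lambda>n. real (b n) * w ^ n);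
          Uf = Abs_fps (U_coeff p)
      in Vw * inverse (1 - Uf * Vw))"

definition x_crit :: "(nat \<Rightarrow> nat) \<Rightarrow> (nat \<Rightarrow> nat) \<Rightarrow> real \<Rightarrow> ereal" where
  "x_crit b p w = fps_conv_radius (Z_fps b p w)"

definition free_energy :: "(nat \<Rightarrow> nat) \<Rightarrow> (nat \<Rightarrow> nat) \<Rightarrow> real \<Rightarrow> real" where
  "free_energy b p w = - ln (real_of_ereal (x_crit b p w))"

definition theta :: "(nat \<Rightarrow> nat) \<Rightarrow> (nat \<Rightarrow> nat) \<Rightarrow> real \<Rightarrow> real" where
  "theta b p w = w * deriv (free_energy b p) w"

end

theory Submission
  imports Defs "HOL-Complex_Analysis.Complex_Analysis"
begin

text \<open>
  Since all coefficients are non-negative, the series \<open>Z(x, w) = V(wx) / (1 - U(x) V(wx))\<close>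
  converges wherever \<open>U(x) V(wx) < 1\<close>, cannot converge beyond a root of \<open>U(x) V(wx) = 1\<close>, and
  its coefficients dominate those of \<open>U\<close>. Hence \<open>x\<^sub>c(w)\<close> is the root \<open>x(w)\<close> when one exists
  below \<open>x\<^sub>U\<close>, and \<open>x\<^sub>U\<close> otherwise. In case (i) the root exists for every \<open>w > 1\<close>; in case (ii)
  exactly for \<open>w > w\<^sub>c\<close>, so that \<open>f = -log x\<^sub>U\<close> is constant below \<open>w\<^sub>c\<close>.
  The root \<open>x(w)\<close> is the inverse function of \<open>W(x) = V\<^sup>-\<^sup>1(1 / U(x)) / x\<close>, which is holomorphic
  near the positive axis with \<open>W'(x) = -(w + U'(x) / (V'(wx) U(x)\<^sup>2)) / x \<noteq> 0\<close>. So
  \<open>f(w) = -log x(w)\<close> is real-analytic with \<open>\<theta>(w) = w / (w + U'(x) / (V'(wx) U(x)\<^sup>2))\<close>,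
  and since \<open>x(w) \<rightarrow> x\<^sub>U\<^sup>-\<close> as \<open>w \<rightarrow> w\<^sub>c\<^sup>+\<close>, \<open>\<theta>\<close> tends to \<open>0\<close> exactly when \<open>U'(x\<^sub>U\<^sup>-) = \<infinity>\<close>.
\<close>

section \<open>Power series with non-negative coefficients\<close>

lemma power_series_nonneg:
  fixes a :: "nat \<Rightarrow> real"
  assumes "\<And>n. 0 \<le> a n" "0 \<le> x" "ereal x < conv_radius a"
  shows "0 \<le> (\<Sum>n. a n * x ^ n)"
  using assms summable_in_conv_radius[of x a] by (intro suminf_nonneg) auto

lemma power_series_pos:
  fixes a :: "nat \<Rightarrow> real"
  assumes "\<And>n. 0 \<le> a n" "0 < a m" "0 < x" "ereal x < conv_radius a"
  shows "0 < (\<Sum>n. a n * x ^ n)"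
  using assms summable_in_conv_radius[of x a] by (intro suminf_pos2[where i=m]) auto

lemma power_series_mono:
  fixes a :: "nat \<Rightarrow> real"
  assumes a: "\<And>n. 0 \<le> a n" and xy: "0 \<le> x" "x \<le> y" and y: "ereal y < conv_radius a"
  shows "(\<Sum>n. a n * x ^ n) \<le> (\<Sum>n. a n * y ^ n)"
proof (rule suminf_le)
  have "ereal x < conv_radius a"
    using xy y by (meson ereal_less_eq(3) le_less_trans)
  then show "summable (\<lambda>n. a n * x ^ n)"
    using xy summable_in_conv_radius[of x a] by simp
  show "summable (\<lambda>n. a n * y ^ n)"
    using xy y summable_in_conv_radius[of y a] by simp
  show "a n * x ^ n \<le> a n * y ^ n" for n
    using a xy by (intro mult_left_mono power_mono) auto
qed

lemma power_series_strict_mono: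
  fixes a :: "nat \<Rightarrow> real"
  assumes a: "\<And>n. 0 \<le> a n" "0 < a m" "1 \<le> m"
    and xy: "0 \<le> x" "x < y" and y: "ereal y < conv_radius a"
  shows "(\<Sum>n. a n * x ^ n) < (\<Sum>n. a n * y ^ n)"
proof -
  have "ereal x < conv_radius a"
    using xy y by (meson ereal_less_eq(3) le_less_trans less_imp_le)
  then have sx: "summable (\<lambda>n. a n * x ^ n)"
    using xy summable_in_conv_radius[of x a] by simp
  have sy: "summable (\<lambda>n. a n * y ^ n)"
    using xy y summable_in_conv_radius[of y a] by simp
  have "0 < (\<Sum>n. a n * y ^ n - a n * x ^ n)"
  proof (rule suminf_pos2[where i=m])
    show "summable (\<lambda>n. a n * y ^ n - a n * x ^ n)" by (rule summable_diff[OF sy sx])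
    show "0 \<le> a n * y ^ n - a n * x ^ n" for n
      using a xy by (auto intro!: mult_left_mono power_mono)
    have "x ^ m < y ^ m" using a xy by (intro power_strict_mono) auto
    then show "0 < a m * y ^ m - a m * x ^ m" using a by simp
  qed
  also have "\<dots> = (\<Sum>n. a n * y ^ n) - (\<Sum>n. a n * x ^ n)"
    by (rule suminf_diff[OF sy sx, symmetric])
  finally show ?thesis by simp
qed

section \<open>Radius of convergence of \<open>F / (1 - G)\<close>\<close>

lemma fps_nth_mult_nonneg:
  fixes F G :: "real fps"
  assumes "\<And>n. 0 \<le> fps_nth F n" "\<And>n. 0 \<le> fps_nth G n"
  shows "0 \<le> fps_nth (F * G) n"
  using assms by (auto simp: fps_mult_nth intro!: sum_nonneg)

lemma fps_nth_mult_ge: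
  fixes F G :: "real fps"
  assumes "\<And>n. 0 \<le> fps_nth F n" "\<And>n. 0 \<le> fps_nth G n" "i \<le> n"
  shows "fps_nth F i * fps_nth G (n - i) \<le> fps_nth (F * G) n"
  unfolding fps_mult_nth using assms
  by (intro member_le_sum[where f="\<lambda>i. fps_nth F i * fps_nth G (n - i)"]) auto

lemma fps_mult_inverse_one_minus_unfold:
  fixes F G :: "'a::field fps"
  assumes "fps_nth G 0 = 0"
  shows "F * inverse (1 - G) = F + G * (F * inverse (1 - G))"
proof -
  define Z where "Z = F * inverse (1 - G)"
  have "Z * (1 - G) = F"
    using assms by (simp add: Z_def mult.assoc inverse_mult_eq_1)
  then show ?thesis by (simp flip: Z_def add: algebra_simps)
qed

lemma fps_nth_mult_inverse_one_minus:
  fixes F G :: "'a::field fps"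
  assumes "fps_nth G 0 = 0"
  shows "fps_nth (F * inverse (1 - G)) n
    = fps_nth F n + (\<Sum>i\<le>n. fps_nth G i * fps_nth (F * inverse (1 - G)) (n - i))"
  by (subst fps_mult_inverse_one_minus_unfold[OF assms]) (simp add: fps_mult_nth atLeast0AtMost)

lemma fps_nth_mult_inverse_one_minus_nonneg:
  fixes F G :: "real fps"
  assumes F: "\<And>n. 0 \<le> fps_nth F n" and G: "\<And>n. 0 \<le> fps_nth G n" and G0: "fps_nth G 0 = 0"
  shows "0 \<le> fps_nth (F * inverse (1 - G)) n"
proof (induction n rule: less_induct)
  case (less n)
  define Z where "Z = F * inverse (1 - G)"
  have "fps_nth Z n = fps_nth F n + (\<Sum>i\<le>n. fps_nth G i * fps_nth Z (n - i))"
    unfolding Z_def using G0 by (rule fps_nth_mult_inverse_one_minus)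
  moreover have "0 \<le> (\<Sum>i\<le>n. fps_nth G i * fps_nth Z (n - i))"
  proof (intro sum_nonneg)
    fix i assume "i \<in> {..n}"
    then show "0 \<le> fps_nth G i * fps_nth Z (n - i)"
      using less G G0 by (cases "i = 0") (auto simp: Z_def)
  qed
  ultimately show ?case
    using F[of n] by (simp add: Z_def)
qed

lemma sum_convolution_le_mult:
  fixes a c :: "nat \<Rightarrow> real"
  assumes "\<And>i. 0 \<le> a i" "\<And>i. 0 \<le> c i"
  shows "(\<Sum>n<N. \<Sum>i\<le>n. a i * c (n - i)) \<le> (\<Sum>i<N. a i) * (\<Sum>j<N. c j)"
proof -
  have "(\<Sum>n<N. \<Sum>i\<le>n. a i * c (n - i)) = (\<Sum>(i,j)\<in>{(i,j). i + j < N}. a i * c j)"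
    by (rule sum.triangle_reindex[symmetric])
  also have "\<dots> \<le> (\<Sum>(i,j)\<in>{..<N} \<times> {..<N}. a i * c j)"
    by (rule sum_mono2) (auto intro: mult_nonneg_nonneg assms)
  also have "\<dots> = (\<Sum>i<N. a i) * (\<Sum>j<N. c j)"
    by (simp add: sum_product sum.cartesian_product)
  finally show ?thesis .
qed

text \<open>The partial sums of \<open>Z = F + G Z\<close> at \<open>r\<close> are bounded by \<open>F(r) / (1 - G(r))\<close>.\<close>
lemma summable_mult_inverse_one_minus:
  fixes F G :: "real fps"
  assumes F: "\<And>n. 0 \<le> fps_nth F n" and G: "\<And>n. 0 \<le> fps_nth G n" and G0: "fps_nth G 0 = 0"
    and r: "0 \<le> r" "ereal r < fps_conv_radius F" "ereal r < fps_conv_radius G"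
    and G_less: "eval_fps G r < 1"
  shows "summable (\<lambda>n. fps_nth (F * inverse (1 - G)) n * r ^ n)"
proof -
  define Z where "Z = F * inverse (1 - G)"
  define z where "z n = fps_nth Z n * r ^ n" for n
  define f where "f n = fps_nth F n * r ^ n" for n
  define g where "g n = fps_nth G n * r ^ n" for n
  have z: "0 \<le> z n" and g: "0 \<le> g n" and f: "0 \<le> f n" for n
    using fps_nth_mult_inverse_one_minus_nonneg[OF F G G0] F G r
    by (simp_all add: z_def g_def f_def Z_def)
  have f_sums: "f sums eval_fps F r" and g_sums: "g sums eval_fps G r"
    using sums_eval_fps[of r F] sums_eval_fps[of r G] r unfolding f_def g_def by simp_all
  have z_unfold: "z n = f n + (\<Sum>i\<le>n. g i * z (n - i))" for n
  proof -
    have "z n = (fps_nth F n + (\<Sum>i\<le>n. fps_nth G i * fps_nth Z (n - i))) * r ^ n"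
      unfolding z_def Z_def by (subst fps_nth_mult_inverse_one_minus[OF G0]) (rule refl)
    also have "\<dots> = f n + (\<Sum>i\<le>n. g i * z (n - i))"
    proof -
      have "fps_nth G i * fps_nth Z (n - i) * r ^ n = g i * z (n - i)" if "i \<le> n" for i
      proof -
        have "r ^ n = r ^ i * r ^ (n - i)" using that by (simp flip: power_add)
        then show ?thesis by (simp add: g_def z_def)
      qed
      then have "(\<Sum>i\<le>n. fps_nth G i * fps_nth Z (n - i) * r ^ n) = (\<Sum>i\<le>n. g i * z (n - i))"
        by (intro sum.cong) auto
      then show ?thesis by (simp only: f_def distrib_right sum_distrib_right)
    qed
    finally show ?thesis .
  qed
  have "(\<Sum>n<N. z n) \<le> eval_fps F r / (1 - eval_fps G r)" for N
  proof -
    have "(\<Sum>n<N. z n) = (\<Sum>n<N. f n + (\<Sum>i\<le>n. g i * z (n - i)))"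
      by (rule sum.cong[OF refl z_unfold])
    also have "\<dots> = (\<Sum>n<N. f n) + (\<Sum>n<N. \<Sum>i\<le>n. g i * z (n - i))"
      by (rule sum.distrib)
    also have "\<dots> \<le> eval_fps F r + (\<Sum>i<N. g i) * (\<Sum>j<N. z j)"
      using f_sums sum_le_suminf[of f "{..<N}"] f sum_convolution_le_mult[of g z N] g z
      by (intro add_mono) (auto simp: sums_iff)
    also have "\<dots> \<le> eval_fps F r + eval_fps G r * (\<Sum>j<N. z j)"
      using g_sums sum_le_suminf[of g "{..<N}"] g z
      by (intro add_left_mono mult_right_mono sum_nonneg) (auto simp: sums_iff)
    finally show ?thesis
      using G_less by (simp add: field_simps)
  qed
  then have "summable z"
    by (rule summableI_nonneg_bounded[OF z])
  then show ?thesis by (simp add: z_def[abs_def] Z_def)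
qed

lemma fps_conv_radius_mult_inverse_one_minus_le_root:
  fixes F G :: "real fps"
  assumes G0: "fps_nth G 0 = 0"
    and r: "0 \<le> r" "ereal r < fps_conv_radius F" "ereal r < fps_conv_radius G"
    and root: "eval_fps G r = 1" and F_nz: "eval_fps F r \<noteq> 0"
  shows "fps_conv_radius (F * inverse (1 - G)) \<le> ereal r"
proof (rule ccontr)
  define Z where "Z = F * inverse (1 - G)"
  assume "\<not> fps_conv_radius (F * inverse (1 - G)) \<le> ereal r"
  then have rZ: "ereal (norm r) < fps_conv_radius Z" using r by (simp add: Z_def)
  have r1G: "ereal (norm r) < fps_conv_radius (1 - G)"
    using fps_conv_radius_diff[of 1 G] r by (auto intro: less_le_trans)
  have "Z * (1 - G) = F"
    using G0 by (simp add: Z_def mult.assoc inverse_mult_eq_1)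
  then have "eval_fps F r = eval_fps Z r * eval_fps (1 - G) r"
    using eval_fps_mult[OF rZ r1G] by simp
  also have "eval_fps (1 - G) r = 0"
    using eval_fps_diff[of r 1 G] r root by simp
  finally show False using F_nz by simp
qed

lemma fps_nth_mult_inverse_one_minus_lower_bound:
  fixes F H :: "real fps"
  assumes F: "\<And>n. 0 \<le> fps_nth F n" and H: "\<And>n. 0 \<le> fps_nth H n" and H0: "fps_nth H 0 = 0"
  shows "fps_nth H n * (fps_nth F m * fps_nth F m) \<le> fps_nth (F * inverse (1 - H * F)) (n + 2 * m)"
proof -
  define G where "G = H * F"
  define Z where "Z = F * inverse (1 - G)"
  have G: "0 \<le> fps_nth G n" for n
    unfolding G_def using H F by (rule fps_nth_mult_nonneg)
  have G0: "fps_nth G 0 = 0" by (simp add: G_def H0)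
  have Z: "0 \<le> fps_nth Z n" for n
    unfolding Z_def using F G G0 by (rule fps_nth_mult_inverse_one_minus_nonneg)
  have Z_unfold: "fps_nth Z n = fps_nth F n + fps_nth (G * Z) n" for n
    unfolding Z_def by (subst fps_mult_inverse_one_minus_unfold[OF G0]) simp
  have GZ: "0 \<le> fps_nth (G * Z) n" for n
    using G Z by (rule fps_nth_mult_nonneg)
  have "fps_nth H n * fps_nth F m * fps_nth F m \<le> fps_nth G (n + m) * fps_nth Z m"
  proof (rule mult_mono)
    show "fps_nth H n * fps_nth F m \<le> fps_nth G (n + m)"
      using fps_nth_mult_ge[OF H F, of n "n + m"] by (simp add: G_def)
    show "fps_nth F m \<le> fps_nth Z m"
      using Z_unfold[of m] GZ[of m] by linarith
  qed (use G F in auto)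
  also have "\<dots> \<le> fps_nth (G * Z) (n + 2 * m)"
    using fps_nth_mult_ge[OF G Z, of "n + m" "n + 2 * m"] by simp
  also have "\<dots> \<le> fps_nth Z (n + 2 * m)"
    using Z_unfold[of "n + 2 * m"] F[of "n + 2 * m"] by linarith
  finally show ?thesis by (simp add: Z_def G_def mult.assoc)
qed

lemma fps_conv_radius_mult_inverse_one_minus_le:
  fixes F H :: "real fps"
  assumes F: "\<And>n. 0 \<le> fps_nth F n" and H: "\<And>n. 0 \<le> fps_nth H n" and H0: "fps_nth H 0 = 0"
    and Fm: "0 < fps_nth F m"
  shows "fps_conv_radius (F * inverse (1 - H * F)) \<le> fps_conv_radius H"
  unfolding fps_conv_radius_def
proof (rule conv_radius_geI_ex')
  define Z where "Z = F * inverse (1 - H * F)"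
  fix r :: real assume r: "0 < r" "ereal r < conv_radius (fps_nth Z)"
  define K where "K = fps_nth F m * fps_nth F m * r ^ (2 * m)"
  have K: "0 < K" using Fm r by (simp add: K_def)
  have "summable (\<lambda>n. fps_nth Z n * r ^ n)"
    using summable_in_conv_radius[of r "fps_nth Z"] r by simp
  then have "summable (\<lambda>n. fps_nth Z (n + 2 * m) * r ^ (n + 2 * m) / K)"
    by (intro summable_divide) (rule summable_ignore_initial_segment)
  then show "summable (\<lambda>n. fps_nth H n * of_real r ^ n)"
  proof (rule summable_comparison_test'[where N=0])
    fix n
    have "fps_nth H n * r ^ n * K = fps_nth H n * (fps_nth F m * fps_nth F m) * r ^ (n + 2 * m)"
      by (simp add: K_def power_add mult_ac)
    also have "\<dots> \<le> fps_nth Z (n + 2 * m) * r ^ (n + 2 * m)"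
      using fps_nth_mult_inverse_one_minus_lower_bound[OF F H H0, of n m] r
      by (intro mult_right_mono) (auto simp: Z_def)
    finally have "fps_nth H n * r ^ n \<le> fps_nth Z (n + 2 * m) * r ^ (n + 2 * m) / K"
      using K by (simp add: pos_le_divide_eq)
    moreover have "norm (fps_nth H n * of_real r ^ n) = fps_nth H n * r ^ n"
      using H[of n] r by simp
    ultimately show "norm (fps_nth H n * of_real r ^ n) \<le> fps_nth Z (n + 2 * m) * r ^ (n + 2 * m) / K"
      by simp
  qed
qed

section \<open>Holomorphic extension of real power series\<close>

definition complex_fps :: "real fps \<Rightarrow> complex fps" where
  "complex_fps F = Abs_fps (\<lambda>n. complex_of_real (fps_nth F n))"

lemma fps_conv_radius_complex_fps [simp]: "fps_conv_radius (complex_fps F) = fps_conv_radius F"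
proof -
  have "fps_conv_radius (complex_fps F) = conv_radius (\<lambda>n. norm (complex_of_real (fps_nth F n)))"
    unfolding fps_conv_radius_def complex_fps_def by (subst conv_radius_norm) simp
  also have "\<dots> = fps_conv_radius F"
    unfolding fps_conv_radius_def by (subst conv_radius_norm[symmetric]) simp
  finally show ?thesis .
qed

lemma fps_deriv_complex_fps: "fps_deriv (complex_fps F) = complex_fps (fps_deriv F)"
  by (simp add: fps_eq_iff complex_fps_def)

lemma eval_complex_fps_of_real:
  assumes "ereal \<bar>x\<bar> < fps_conv_radius F"
  shows "eval_fps (complex_fps F) (of_real x) = of_real (eval_fps F x)"
proof -
  have "(\<lambda>n. complex_of_real (fps_nth F n * x ^ n)) sums of_real (eval_fps F x)"
    using sums_eval_fps[of x F] assms by (simp only: sums_of_real_iff) simp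
  moreover have "(\<lambda>n. fps_nth (complex_fps F) n * of_real x ^ n) sums eval_fps (complex_fps F) (of_real x)"
    using assms by (intro sums_eval_fps) simp
  ultimately show ?thesis
    by (simp add: complex_fps_def sums_unique2)
qed

lemma eval_complex_fps_cnj:
  assumes "ereal (norm z) < fps_conv_radius F"
  shows "eval_fps (complex_fps F) (cnj z) = cnj (eval_fps (complex_fps F) z)"
proof -
  have "(\<lambda>n. cnj (fps_nth (complex_fps F) n * z ^ n)) sums cnj (eval_fps (complex_fps F) z)"
    using assms by (simp only: sums_cnj) (intro sums_eval_fps, simp)
  moreover have "(\<lambda>n. fps_nth (complex_fps F) n * cnj z ^ n) sums eval_fps (complex_fps F) (cnj z)"
    using assms by (intro sums_eval_fps) simp
  ultimately show ?thesis
    by (simp add: complex_fps_def sums_unique2)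
qed

lemma deriv_eval_complex_fps_of_real:
  assumes "ereal \<bar>x\<bar> < fps_conv_radius F"
  shows "deriv (eval_fps (complex_fps F)) (of_real x) = of_real (deriv (eval_fps F) x)"
proof -
  have "ereal \<bar>x\<bar> < fps_conv_radius (fps_deriv F)"
    using assms fps_conv_radius_deriv[of F] by (rule less_le_trans)
  then show ?thesis
    using assms
    by (simp flip: eval_fps_deriv add: fps_deriv_complex_fps eval_complex_fps_of_real)
qed

section \<open>Holomorphic functions that are real on the real axis\<close>

lemma holomorphic_local_inverse_cnj:
  fixes f :: "complex \<Rightarrow> complex"
  assumes holf: "f holomorphic_on S" and S: "open S" "\<xi> \<in> S" "\<xi> \<in> \<real>"
    and f': "deriv f \<xi> \<noteq> 0"
    and f_cnj: "\<And>z. z \<in> S \<Longrightarrow> cnj z \<in> S \<and> f (cnj z) = cnj (f z)"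
  obtains r g where "0 < r" "ball \<xi> r \<subseteq> S" "open (f ` ball \<xi> r)" "g holomorphic_on f ` ball \<xi> r"
    "\<And>z. z \<in> ball \<xi> r \<Longrightarrow> g (f z) = z"
    "\<And>z. z \<in> ball \<xi> r \<Longrightarrow> deriv f z * deriv g (f z) = 1"
    "\<And>s. s \<in> f ` ball \<xi> r \<Longrightarrow> cnj s \<in> f ` ball \<xi> r \<and> g (cnj s) = cnj (g s)"
proof -
  obtain r where r: "0 < r" "ball \<xi> r \<subseteq> S" "inj_on f (ball \<xi> r)"
    using has_complex_derivative_locally_injective[OF holf S(2,1) f'] by metis
  have holr: "f holomorphic_on ball \<xi> r"
    using holf r(2) by (rule holomorphic_on_subset)
  obtain g where g: "g holomorphic_on f ` ball \<xi> r"
    "\<And>z. z \<in> ball \<xi> r \<Longrightarrow> deriv f z * deriv g (f z) = 1"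
    "\<And>z. z \<in> ball \<xi> r \<Longrightarrow> g (f z) = z"
    using holomorphic_has_inverse[OF holr open_ball r(3)] by metis
  have "open (f ` ball \<xi> r)"
    using holr r(3) by (intro open_mapping_thm3) auto
  moreover have "cnj s \<in> f ` ball \<xi> r \<and> g (cnj s) = cnj (g s)" if s: "s \<in> f ` ball \<xi> r" for s
  proof -
    obtain z where z: "z \<in> ball \<xi> r" "s = f z" using s by auto
    have "dist \<xi> (cnj z) = dist \<xi> z"
      using S(3) by (metis Reals_cnj_iff complex_cnj_diff complex_mod_cnj dist_norm)
    then have cz: "cnj z \<in> ball \<xi> r" using z by simp
    have "f (cnj z) = cnj s" using f_cnj[of z] z r(2) by auto
    then show ?thesis using cz g(3)[OF cz] g(3)[OF z(1)] z by (metis image_eqI)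
  qed
  ultimately show ?thesis using that[OF r(1,2) _ g(1) g(3) g(2)] by blast
qed

lemma cnj_in_ball_of_real_iff [simp]: "cnj s \<in> ball (of_real c) r \<longleftrightarrow> s \<in> ball (of_real c) r"
proof -
  have "of_real c - cnj s = cnj (of_real c - s)" by simp
  then show ?thesis by (simp only: mem_ball dist_norm complex_mod_cnj)
qed

lemma holomorphic_local_inverse_real:
  fixes f :: "complex \<Rightarrow> complex"
  assumes holf: "f holomorphic_on S" and S: "open S" "of_real x \<in> S"
    and f': "deriv f (of_real x) \<noteq> 0"
    and f_cnj: "\<And>z. z \<in> S \<Longrightarrow> cnj z \<in> S \<and> f (cnj z) = cnj (f z)"
    and f_x: "f (of_real x) = of_real y"
  obtains \<epsilon> g where "0 < \<epsilon>" "g holomorphic_on ball (of_real y) \<epsilon>" "g (of_real y) = of_real x"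
    "(g has_field_derivative inverse (deriv f (of_real x))) (at (of_real y))"
    "\<And>s. s \<in> ball (of_real y) \<epsilon> \<Longrightarrow> g s \<in> S \<and> f (g s) = s \<and> g (cnj s) = cnj (g s)"
proof -
  obtain r g where r: "0 < r" "ball (of_real x) r \<subseteq> S"
    and T: "open (f ` ball (of_real x) r)" and holg: "g holomorphic_on f ` ball (of_real x) r"
    and g_f: "\<And>z. z \<in> ball (of_real x) r \<Longrightarrow> g (f z) = z"
    and g': "\<And>z. z \<in> ball (of_real x) r \<Longrightarrow> deriv f z * deriv g (f z) = 1"
    and g_cnj: "\<And>s. s \<in> f ` ball (of_real x) r \<Longrightarrow>
       cnj s \<in> f ` ball (of_real x) r \<and> g (cnj s) = cnj (g s)"
    using holomorphic_local_inverse_cnj[OF holf S Reals_of_real f' f_cnj] by blast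
  have x_in: "of_real x \<in> ball (of_real x) r" using r by simp
  have y_in: "of_real y \<in> f ` ball (of_real x) r"
    using x_in f_x by (metis image_eqI)
  then obtain \<epsilon> where \<epsilon>: "0 < \<epsilon>" "ball (of_real y) \<epsilon> \<subseteq> f ` ball (of_real x) r"
    using T open_contains_ball by blast
  have "deriv g (of_real y) = inverse (deriv f (of_real x))"
    using g'[OF x_in] f_x f' by (simp add: field_simps)
  then have "(g has_field_derivative inverse (deriv f (of_real x))) (at (of_real y))"
    using holomorphic_derivI[OF holg T y_in] by simp
  moreover have "g s \<in> S \<and> f (g s) = s \<and> g (cnj s) = cnj (g s)" if s: "s \<in> ball (of_real y) \<epsilon>" for s
  proof -
    obtain z where z: "z \<in> ball (of_real x) r" "s = f z"
      using s \<epsilon>(2) by blast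
    then show ?thesis
      using g_f[OF z(1)] g_cnj[of s] r(2) by auto
  qed
  ultimately show ?thesis
    using that \<epsilon>(1) holomorphic_on_subset[OF holg \<epsilon>(2)] g_f[OF x_in] f_x by auto
qed

lemma Re_holomorphic_power_series:
  fixes F :: "complex \<Rightarrow> complex"
  assumes holF: "F holomorphic_on ball (of_real x0) r"
    and f: "\<And>x. \<bar>x - x0\<bar> < r \<Longrightarrow> f x = Re (F (of_real x))"
  shows "\<exists>a. \<forall>x. \<bar>x - x0\<bar> < r \<longrightarrow> (\<lambda>n. a n * (x - x0) ^ n) sums f x"
proof (intro exI allI impI)
  fix x assume x: "\<bar>x - x0\<bar> < r"
  then have x_in: "complex_of_real x \<in> ball (of_real x0) r"
    by (simp add: dist_norm abs_minus_commute flip: of_real_diff)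
  have Re_mult: "Re (a * complex_of_real t) = Re a * t" for a t
    by simp
  have term_eq: "Re ((deriv ^^ n) F (of_real x0) / fact n * (of_real x - of_real x0) ^ n)
      = Re ((deriv ^^ n) F (of_real x0) / fact n) * (x - x0) ^ n" for n
  proof -
    have "(complex_of_real x - of_real x0) ^ n = of_real ((x - x0) ^ n)" by simp
    then show ?thesis by (simp only: Re_mult)
  qed
  from sums_Re[OF holomorphic_power_series[OF holF x_in]]
  show "(\<lambda>n. Re ((deriv ^^ n) F (of_real x0) / fact n) * (x - x0) ^ n) sums f x"
    by (simp only: term_eq f[OF x])
qed

lemma Re_holomorphic_has_real_derivative:
  fixes F :: "complex \<Rightarrow> complex"
  assumes F': "(F has_field_derivative of_real D) (at (of_real x0))" and r: "0 < r"
    and f: "\<And>x. \<bar>x - x0\<bar> < r \<Longrightarrow> f x = Re (F (of_real x))"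
  shows "(f has_real_derivative D) (at x0)"
proof -
  have "((\<lambda>x. F (of_real x)) has_vector_derivative of_real D) (at x0)"
    by (rule has_vector_derivative_real_field[OF F'])
  then have "((\<lambda>x. Re (F (of_real x))) has_real_derivative D) (at x0)"
    using has_field_derivative_Re by fastforce
  then show ?thesis
  proof (rule has_field_derivative_transform_within_open)
    show "Re (F (of_real x)) = f x" if "x \<in> ball x0 r" for x
      using f[of x] that by (simp add: dist_norm abs_minus_commute)
  qed (use r in auto)
qed

section \<open>The generating functions of the model\<close>

locale poland_scheraga =
  fixes b p :: "nat \<Rightarrow> nat" and xU xV :: real
  assumes p_nonzero: "\<exists>n\<ge>1. p n \<noteq> 0"
    and radV: "conv_radius (\<lambda>n. real (b n)) = ereal xV"
    and radU: "conv_radius (U_coeff p) = ereal xU"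
    and xU_pos: "0 < xU" and xU_less_xV: "xU < xV"
    and V_blowup: "filterlim (PS_V b) at_top (at_left xV)"
begin

abbreviation "U \<equiv> PS_U p"
abbreviation "V \<equiv> PS_V b"

definition "U_fps = Abs_fps (U_coeff p)"
definition "V_fps = Abs_fps (\<lambda>n. real (b n))"
definition "Vw_fps w = Abs_fps (\<lambda>n. real (b n) * w ^ n)"

lemma Z_fps_eq: "Z_fps b p w = Vw_fps w * inverse (1 - U_fps * Vw_fps w)"
  by (simp add: Z_fps_def Let_def Vw_fps_def U_fps_def)

lemma U_eq_eval_fps: "U = eval_fps U_fps"
  by (auto simp: fun_eq_iff PS_U_def eval_fps_def U_fps_def)

lemma V_eq_eval_fps: "V = eval_fps V_fps"
  by (auto simp: fun_eq_iff PS_V_def eval_fps_def V_fps_def)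

lemma eval_Vw_fps: "eval_fps (Vw_fps w) x = V (w * x)"
  by (simp add: eval_fps_def Vw_fps_def PS_V_def power_mult_distrib mult.assoc)

lemma fps_conv_radius_U_fps: "fps_conv_radius U_fps = ereal xU"
  using radU by (simp add: fps_conv_radius_def U_fps_def)

lemma fps_conv_radius_V_fps: "fps_conv_radius V_fps = ereal xV"
  using radV by (simp add: fps_conv_radius_def V_fps_def)

lemma fps_conv_radius_Vw_fps:
  assumes "0 < w"
  shows "fps_conv_radius (Vw_fps w) = ereal (xV / w)"
proof -
  have "fps_conv_radius (Vw_fps w) = conv_radius (\<lambda>n. w ^ n * real (b n))"
    by (simp add: fps_conv_radius_def Vw_fps_def mult.commute)
  also have "\<dots> = conv_radius (\<lambda>n. real (b n)) / ereal (norm w)"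
    using assms by (intro conv_radius_mult_power) auto
  finally show ?thesis using radV assms by simp
qed

lemma U_coeff_nonneg: "0 \<le> U_coeff p n"
  by (simp add: U_coeff_def)

lemma U_fps_nth_nonneg: "0 \<le> fps_nth U_fps n"
  by (simp add: U_fps_def U_coeff_nonneg)

lemma U_fps_nth_0: "fps_nth U_fps 0 = 0"
  by (simp add: U_fps_def U_coeff_def)

lemma Vw_fps_nth_nonneg: "0 \<le> w \<Longrightarrow> 0 \<le> fps_nth (Vw_fps w) n"
  by (simp add: Vw_fps_def)

lemma U_0: "U 0 = 0"
  by (simp add: U_eq_eval_fps eval_fps_at_0 U_fps_nth_0)

lemma V_not_constant: obtains m where "1 \<le> m" "0 < b m"
proof -
  have "\<exists>m\<ge>1. 0 < b m"
  proof (rule ccontr)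
    assume "\<not> (\<exists>m\<ge>1. 0 < b m)"
    then have "b n = 0" if "n \<noteq> 0" for n
      using that by auto
    then have "(\<lambda>n. real (b n) * x ^ n) = (\<lambda>n. if n = 0 then real (b 0) else 0)" for x
      by (auto simp: fun_eq_iff)
    then have "V = (\<lambda>_. real (b 0))"
      using sums_single[of 0 "\<lambda>_. real (b 0)"] by (simp add: fun_eq_iff PS_V_def sums_iff)
    with V_blowup have "eventually (\<lambda>_. real (b 0) + 1 \<le> real (b 0)) (at_left xV)"
      by (simp add: filterlim_at_top)
    then show False
      using xU_pos xU_less_xV by (simp add: trivial_limit_at_left_real)
  qed
  then show ?thesis using that by blast
qed

lemma U_not_constant: obtains m where "1 \<le> m" "0 < U_coeff p m"
  using p_nonzero by (auto simp: U_coeff_def)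

lemma U_pos:
  assumes "0 < x" "x < xU"
  shows "0 < U x"
proof -
  obtain m where "1 \<le> m" "0 < U_coeff p m" by (rule U_not_constant)
  then show ?thesis
    unfolding PS_U_def using assms radU U_coeff_nonneg by (intro power_series_pos) auto
qed

lemma U_nonneg: "0 \<le> x \<Longrightarrow> x < xU \<Longrightarrow> 0 \<le> U x"
  unfolding PS_U_def using radU U_coeff_nonneg by (intro power_series_nonneg) auto

lemma U_strict_mono:
  assumes "0 \<le> x" "x < y" "y < xU"
  shows "U x < U y"
proof -
  obtain m where "1 \<le> m" "0 < U_coeff p m" by (rule U_not_constant)
  then show ?thesis
    unfolding PS_U_def using assms radU U_coeff_nonneg by (intro power_series_strict_mono) auto
qed

lemma U_mono: "0 \<le> x \<Longrightarrow> x \<le> y \<Longrightarrow> y < xU \<Longrightarrow> U x \<le> U y"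
  unfolding PS_U_def using radU U_coeff_nonneg by (intro power_series_mono) auto

lemma V_pos:
  assumes "0 < x" "x < xV"
  shows "0 < V x"
proof -
  obtain m where "1 \<le> m" "0 < b m" by (rule V_not_constant)
  then show ?thesis
    unfolding PS_V_def using assms radV by (intro power_series_pos) auto
qed

lemma V_nonneg: "0 \<le> x \<Longrightarrow> x < xV \<Longrightarrow> 0 \<le> V x"
  unfolding PS_V_def using radV by (intro power_series_nonneg) auto

lemma V_strict_mono:
  assumes "0 \<le> x" "x < y" "y < xV"
  shows "V x < V y"
proof -
  obtain m where "1 \<le> m" "0 < b m" by (rule V_not_constant)
  then show ?thesis
    unfolding PS_V_def using assms radV by (intro power_series_strict_mono) auto
qed

lemma V_mono: "0 \<le> x \<Longrightarrow> x \<le> y \<Longrightarrow> y < xV \<Longrightarrow> V x \<le> V y"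
  unfolding PS_V_def using radV by (intro power_series_mono) auto

lemma deriv_U: "\<bar>x\<bar> < xU \<Longrightarrow> deriv U x = eval_fps (fps_deriv U_fps) x"
  by (simp add: U_eq_eval_fps eval_fps_deriv fps_conv_radius_U_fps)

lemma deriv_V: "\<bar>x\<bar> < xV \<Longrightarrow> deriv V x = eval_fps (fps_deriv V_fps) x"
  by (simp add: V_eq_eval_fps eval_fps_deriv fps_conv_radius_V_fps)

lemma isCont_U: "\<bar>x\<bar> < xU \<Longrightarrow> isCont U x"
  by (simp add: U_eq_eval_fps continuous_eval_fps fps_conv_radius_U_fps)

lemma isCont_V: "\<bar>x\<bar> < xV \<Longrightarrow> isCont V x"
  by (simp add: V_eq_eval_fps continuous_eval_fps fps_conv_radius_V_fps)

lemma isCont_deriv_V: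
  assumes "\<bar>y\<bar> < xV"
  shows "isCont (deriv V) y"
proof -
  have "eventually (\<lambda>z. z \<in> {-xV<..<xV}) (nhds y)"
    using assms by (intro eventually_nhds_in_open) auto
  then have "eventually (\<lambda>z. deriv V z = eval_fps (fps_deriv V_fps) z) (nhds y)"
    by eventually_elim (auto simp: deriv_V)
  moreover have "ereal \<bar>y\<bar> < fps_conv_radius (fps_deriv V_fps)"
    using assms fps_conv_radius_deriv[of V_fps] less_le_trans[of "ereal \<bar>y\<bar>" "ereal xV"]
    by (simp add: fps_conv_radius_V_fps)
  ultimately show ?thesis
    by (simp add: isCont_cong continuous_eval_fps)
qed

lemma deriv_U_nonneg:
  assumes "0 \<le> x" "x < xU"
  shows "0 \<le> deriv U x"
proof -
  have "ereal x < ereal xU"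
    using assms by simp
  also have "\<dots> \<le> fps_conv_radius (fps_deriv U_fps)"
    using fps_conv_radius_deriv[of U_fps] by (simp add: fps_conv_radius_U_fps)
  finally have "0 \<le> (\<Sum>n. fps_nth (fps_deriv U_fps) n * x ^ n)"
    using assms by (intro power_series_nonneg)
      (auto simp: U_fps_def U_coeff_nonneg fps_conv_radius_def)
  then show ?thesis using assms by (simp add: deriv_U eval_fps_def)
qed

lemma deriv_V_pos:
  assumes "0 < x" "x < xV"
  shows "0 < deriv V x"
proof -
  obtain m where m: "1 \<le> m" "0 < b m" by (rule V_not_constant)
  have "ereal x < ereal xV"
    using assms by simp
  also have "\<dots> \<le> fps_conv_radius (fps_deriv V_fps)"
    using fps_conv_radius_deriv[of V_fps] by (simp add: fps_conv_radius_V_fps)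
  finally have "0 < (\<Sum>n. fps_nth (fps_deriv V_fps) n * x ^ n)"
    using assms m by (intro power_series_pos[where m="m - 1"])
      (auto simp: V_fps_def fps_conv_radius_def)
  then show ?thesis using assms by (simp add: deriv_V eval_fps_def)
qed

section \<open>The radius of convergence \<open>x_c(w)\<close>\<close>

lemma eval_U_Vw_fps:
  assumes "0 < w" "0 \<le> x" "x < xU" "w * x < xV"
  shows "ereal x < fps_conv_radius (U_fps * Vw_fps w)"
    and "eval_fps (U_fps * Vw_fps w) x = U x * V (w * x)"
proof -
  have x: "ereal x < fps_conv_radius U_fps" "ereal x < fps_conv_radius (Vw_fps w)"
    using assms by (simp_all add: fps_conv_radius_U_fps fps_conv_radius_Vw_fps field_simps)
  then have "ereal x < min (fps_conv_radius U_fps) (fps_conv_radius (Vw_fps w))"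
    by simp
  then show "ereal x < fps_conv_radius (U_fps * Vw_fps w)"
    using fps_conv_radius_mult[of U_fps "Vw_fps w"] by (rule less_le_trans)
  show "eval_fps (U_fps * Vw_fps w) x = U x * V (w * x)"
    using x assms by (simp add: eval_fps_mult U_eq_eval_fps eval_Vw_fps)
qed

lemma x_crit_ge:
  assumes w: "0 < w"
    and less_1: "\<And>x. 0 < x \<Longrightarrow> x < R \<Longrightarrow> x < xU \<and> w * x < xV \<and> U x * V (w * x) < 1"
  shows "ereal R \<le> x_crit b p w"
  unfolding x_crit_def Z_fps_eq fps_conv_radius_def
proof (rule conv_radius_geI_ex')
  fix r :: real assume "0 < r" "ereal r < ereal R"
  with less_1[of r] have r: "0 < r" "r < xU" "w * r < xV" "U r * V (w * r) < 1" by auto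
  have "ereal r < fps_conv_radius (Vw_fps w)"
    using r w by (simp add: fps_conv_radius_Vw_fps field_simps)
  then show "summable (\<lambda>n. fps_nth (Vw_fps w * inverse (1 - U_fps * Vw_fps w)) n * of_real r ^ n)"
    using r w eval_U_Vw_fps[of w r]
    by (intro summable_mult_inverse_one_minus fps_nth_mult_nonneg Vw_fps_nth_nonneg
        U_fps_nth_nonneg) (auto simp: U_fps_nth_0)
qed

lemma x_crit_le_root:
  assumes w: "0 < w" and x: "0 < x" "x < xU" "w * x < xV" and root: "U x * V (w * x) = 1"
  shows "x_crit b p w \<le> ereal x"
  unfolding x_crit_def Z_fps_eq
proof (rule fps_conv_radius_mult_inverse_one_minus_le_root)
  show "ereal x < fps_conv_radius (Vw_fps w)"
    using x w by (simp add: fps_conv_radius_Vw_fps field_simps)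
  show "eval_fps (Vw_fps w) x \<noteq> 0"
    using root by (auto simp: eval_Vw_fps)
qed (use w x root eval_U_Vw_fps[of w x] in \<open>auto simp: U_fps_nth_0\<close>)

lemma x_crit_le_xU:
  assumes "0 < w"
  shows "x_crit b p w \<le> ereal xU"
proof -
  obtain m where "1 \<le> m" "0 < b m" by (rule V_not_constant)
  then have "0 < fps_nth (Vw_fps w) m"
    using assms by (simp add: Vw_fps_def)
  then have "x_crit b p w \<le> fps_conv_radius U_fps"
    unfolding x_crit_def Z_fps_eq using assms
    by (intro fps_conv_radius_mult_inverse_one_minus_le Vw_fps_nth_nonneg U_fps_nth_nonneg
        U_fps_nth_0) auto
  then show ?thesis by (simp add: fps_conv_radius_U_fps)
qed

lemma x_crit_root:
  assumes w: "0 < w" and x: "0 < x" "x < xU" "w * x < xV" and root: "U x * V (w * x) = 1"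
  shows "x_crit b p w = ereal x"
proof (rule antisym)
  show "x_crit b p w \<le> ereal x"
    using w x root by (rule x_crit_le_root)
  show "ereal x \<le> x_crit b p w"
  proof (rule x_crit_ge[OF w])
    fix t assume t: "0 < t" "t < x"
    have "U t * V (w * t) \<le> U t * V (w * x)"
      using t x w by (intro mult_left_mono V_mono U_nonneg) auto
    also have "\<dots> < U x * V (w * x)"
      using t x w V_pos[of "w * x"] by (intro mult_strict_right_mono U_strict_mono) auto
    finally show "t < xU \<and> w * t < xV \<and> U t * V (w * t) < 1"
      using t x w root by (auto intro: less_trans mult_strict_left_mono)
  qed
qed

section \<open>Existence of a root of \<open>U(x) V(wx) = 1\<close>\<close>

lemma root_exists_if_gt_1:
  assumes w: "0 < w" and x: "0 < x" "x < xU" "w * x < xV" and gt_1: "1 < U x * V (w * x)"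
  obtains x0 where "0 < x0" "x0 < xU" "w * x0 < xV" "U x0 * V (w * x0) = 1"
proof -
  have "continuous_on {0..x} (\<lambda>t. U t * V (w * t))"
  proof (intro continuous_at_imp_continuous_on ballI)
    fix t assume t: "t \<in> {0..x}"
    have "0 \<le> w * t" "w * t \<le> w * x" using t w by (auto intro: mult_left_mono)
    then have "\<bar>w * t\<bar> < xV"
      using x(3) abs_of_nonneg[of "w * t"] by linarith
    then have "isCont V (w * t)"
      by (rule isCont_V)
    then have "isCont (\<lambda>t. V (w * t)) t"
      by (rule isCont_o2[rotated]) (intro continuous_intros)
    moreover have "isCont U t" using t x by (intro isCont_U) auto
    ultimately show "isCont (\<lambda>t. U t * V (w * t)) t" by (intro continuous_intros)
  qed
  then obtain x0 where x0: "0 \<le> x0" "x0 \<le> x" "U x0 * V (w * x0) = 1"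
    using IVT'[of "\<lambda>t. U t * V (w * t)" 0 1 x] x gt_1 U_0 by auto
  moreover have "x0 \<noteq> 0" using x0 U_0 by auto
  moreover have "w * x0 < xV" using mult_left_mono[OF x0(2), of w] w x(3) by linarith
  ultimately show ?thesis using x(2) by (intro that[of x0]) auto
qed

lemma exists_gt_1_if_large_weight:
  assumes w: "0 < w" and large: "xV \<le> w * xU"
  shows "\<exists>x. 0 < x \<and> x < xU \<and> w * x < xV \<and> 1 < U x * V (w * x)"
proof -
  define a where "a = xV / (2 * w)"
  have a: "0 < a" "w * a < xV" "a < xU"
    using w xU_pos xU_less_xV large by (auto simp: a_def field_simps)
  have "eventually (\<lambda>y. 1 / U a < V y \<and> y \<in> {w * a<..<xV}) (at_left xV)"
    using V_blowup eventually_at_left_real[OF a(2)]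
    by (auto simp: filterlim_at_top_dense intro: eventually_conj)
  then obtain y where y: "1 / U a < V y" "w * a < y" "y < xV"
    using eventually_happens'[of "at_left xV"] by auto
  define x where "x = y / w"
  have x: "a < x" "x < xU" "w * x = y"
    using y w large by (auto simp: x_def field_simps intro: less_le_trans)
  have "1 < U a * V y"
    using y U_pos[of a] a by (simp add: field_simps)
  also have "\<dots> \<le> U x * V y"
    using a x y w V_pos[of y] by (intro mult_right_mono U_mono) auto
  finally show ?thesis using a x y by (intro exI[of _ x]) auto
qed

lemma U_tendsto_limit_pos:
  assumes L: "(U \<longlongrightarrow> L) (at_left xU)"
  shows "0 < L" and "\<And>x. 0 \<le> x \<Longrightarrow> x < xU \<Longrightarrow> U x < L"
proof -
  have U_le: "U x \<le> L" if x: "0 \<le> x" "x < xU" for x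
  proof (rule tendsto_lowerbound[OF L])
    show "eventually (\<lambda>t. U x \<le> U t) (at_left xU)"
      using eventually_at_left_real[OF x(2)] by eventually_elim (use x in \<open>auto intro: U_mono\<close>)
  qed simp
  show U_less: "U x < L" if x: "0 \<le> x" "x < xU" for x
  proof -
    have "U x < U ((x + xU) / 2)" using x by (intro U_strict_mono) auto
    also have "\<dots> \<le> L" using x by (intro U_le) auto
    finally show ?thesis .
  qed
  show "0 < L"
    using U_less[of 0] xU_pos by (simp add: U_0)
qed

lemma exists_gt_1_if_U_tendsto:
  assumes w: "0 < w" "w * xU < xV" and L: "(U \<longlongrightarrow> L) (at_left xU)"
    and gt_1: "1 < L * V (w * xU)"
  shows "\<exists>x. 0 < x \<and> x < xU \<and> w * x < xV \<and> 1 < U x * V (w * x)"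
proof -
  have "\<bar>w * xU\<bar> < xV" using w xU_pos by simp
  then have "((\<lambda>x. V (w * x)) \<longlongrightarrow> V (w * xU)) (at_left xU)"
    by (intro isCont_tendsto_compose[OF isCont_V] tendsto_intros)
  with L have "((\<lambda>x. U x * V (w * x)) \<longlongrightarrow> L * V (w * xU)) (at_left xU)"
    by (rule tendsto_mult)
  then have "eventually (\<lambda>x. 1 < U x * V (w * x) \<and> x \<in> {0<..<xU}) (at_left xU)"
    using gt_1 eventually_at_left_real[OF xU_pos] by (auto intro: eventually_conj order_tendstoD)
  then obtain x where x: "1 < U x * V (w * x)" "0 < x" "x < xU"
    using eventually_happens'[of "at_left xU"] by auto
  have "w * x < w * xU" using x w by simp
  then have "w * x < xV" using w(2) by linarith
  then show ?thesis using x by (intro exI[of _ x]) auto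
qed

lemma exists_gt_1_if_U_diverges:
  assumes w: "0 < w" "w * xU < xV" and U_inf: "filterlim U at_top (at_left xU)"
  shows "\<exists>x. 0 < x \<and> x < xU \<and> w * x < xV \<and> 1 < U x * V (w * x)"
proof -
  define c where "c = V (w * xU / 2)"
  have c: "0 < c" unfolding c_def using w xU_pos xU_less_xV by (intro V_pos) auto
  have "eventually (\<lambda>x. 1 / c < U x \<and> x \<in> {xU / 2<..<xU}) (at_left xU)"
    using U_inf eventually_at_left_real[of "xU / 2" xU] xU_pos
    by (auto simp: filterlim_at_top_dense intro: eventually_conj)
  then obtain x where x: "1 / c < U x" "xU / 2 < x" "x < xU"
    using eventually_happens'[of "at_left xU"] by auto
  have "w * x < w * xU" using x w by simp
  then have wx: "w * x < xV" using w(2) by linarith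
  have "1 < U x * c" using x c by (simp add: field_simps)
  also have "\<dots> \<le> U x * V (w * x)"
    unfolding c_def using x w wx xU_pos by (intro mult_left_mono V_mono U_nonneg) auto
  finally show ?thesis using x wx xU_pos by (intro exI[of _ x]) auto
qed

lemma root_exists:
  assumes w: "0 < w"
    and gt_1: "w * xU < xV \<Longrightarrow> \<exists>x. 0 < x \<and> x < xU \<and> w * x < xV \<and> 1 < U x * V (w * x)"
  obtains x0 where "0 < x0" "x0 < xU" "w * x0 < xV" "U x0 * V (w * x0) = 1"
proof -
  have "\<exists>x. 0 < x \<and> x < xU \<and> w * x < xV \<and> 1 < U x * V (w * x)"
    using gt_1 exists_gt_1_if_large_weight[OF w] by fastforce
  then show ?thesis
    using root_exists_if_gt_1[OF w] that by blast
qed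

section \<open>The root as an analytic function of the weight\<close>

abbreviation "Uc \<equiv> eval_fps (complex_fps U_fps)"
abbreviation "Vc \<equiv> eval_fps (complex_fps V_fps)"

lemma Uc_of_real: "\<bar>x\<bar> < xU \<Longrightarrow> Uc (of_real x) = of_real (U x)"
  by (simp add: U_eq_eval_fps eval_complex_fps_of_real fps_conv_radius_U_fps)

lemma Vc_of_real: "\<bar>x\<bar> < xV \<Longrightarrow> Vc (of_real x) = of_real (V x)"
  by (simp add: V_eq_eval_fps eval_complex_fps_of_real fps_conv_radius_V_fps)

lemma Uc_cnj: "norm z < xU \<Longrightarrow> Uc (cnj z) = cnj (Uc z)"
  by (simp add: eval_complex_fps_cnj fps_conv_radius_U_fps)

lemma Vc_cnj: "norm z < xV \<Longrightarrow> Vc (cnj z) = cnj (Vc z)"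
  by (simp add: eval_complex_fps_cnj fps_conv_radius_V_fps)

lemma holomorphic_Uc: "Uc holomorphic_on ball 0 xU"
  by (rule holomorphic_on_eval_fps) (simp add: fps_conv_radius_U_fps)

lemma holomorphic_Vc: "Vc holomorphic_on ball 0 xV"
  by (rule holomorphic_on_eval_fps) (simp add: fps_conv_radius_V_fps)

lemma deriv_Uc_of_real: "\<bar>x\<bar> < xU \<Longrightarrow> deriv Uc (of_real x) = of_real (deriv U x)"
  by (simp add: U_eq_eval_fps deriv_eval_complex_fps_of_real fps_conv_radius_U_fps)

lemma deriv_Vc_of_real: "\<bar>x\<bar> < xV \<Longrightarrow> deriv Vc (of_real x) = of_real (deriv V x)"
  by (simp add: V_eq_eval_fps deriv_eval_complex_fps_of_real fps_conv_radius_V_fps)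

lemma V_local_inverse:
  assumes y0: "0 < y0" "y0 < xV"
  obtains \<epsilon> Vi where "0 < \<epsilon>" "Vi holomorphic_on ball (of_real (V y0)) \<epsilon>"
    "Vi (of_real (V y0)) = of_real y0"
    "(Vi has_field_derivative of_real (1 / deriv V y0)) (at (of_real (V y0)))"
    "\<And>s. s \<in> ball (of_real (V y0)) \<epsilon> \<Longrightarrow>
       Vc (Vi s) = s \<and> norm (Vi s) < xV \<and> 0 < Re (Vi s) \<and> Vi (cnj s) = cnj (Vi s)"
proof -
  define S where "S = ball 0 xV \<inter> {z. 0 < Re z}"
  have S: "open S" "of_real y0 \<in> S"
    using y0 unfolding S_def by (auto intro: open_Int open_halfspace_Re_gt)
  have holVc: "Vc holomorphic_on S"
    using holomorphic_Vc by (rule holomorphic_on_subset) (auto simp: S_def)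
  have Vc': "deriv Vc (of_real y0) = of_real (deriv V y0)" "deriv V y0 \<noteq> 0"
    using y0 deriv_V_pos[of y0] by (simp_all add: deriv_Vc_of_real)
  have S_cnj: "cnj z \<in> S \<and> Vc (cnj z) = cnj (Vc z)" if "z \<in> S" for z
    using that Vc_cnj by (auto simp: S_def)
  have Vc_y0: "Vc (of_real y0) = of_real (V y0)"
    using y0 by (simp add: Vc_of_real)
  obtain \<epsilon> Vi where "0 < \<epsilon>" "Vi holomorphic_on ball (of_real (V y0)) \<epsilon>"
    "Vi (of_real (V y0)) = of_real y0"
    "(Vi has_field_derivative inverse (deriv Vc (of_real y0))) (at (of_real (V y0)))"
    and Vi_inv: "\<And>s. s \<in> ball (of_real (V y0)) \<epsilon> \<Longrightarrow> Vi s \<in> S \<and> Vc (Vi s) = s \<and> Vi (cnj s) = cnj (Vi s)"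
    using holomorphic_local_inverse_real[OF holVc S _ S_cnj Vc_y0] Vc' by auto
  moreover have "norm (Vi s) < xV \<and> 0 < Re (Vi s)" if "s \<in> ball (of_real (V y0)) \<epsilon>" for s
    using Vi_inv[OF that] by (simp add: S_def)
  ultimately show ?thesis
    using that Vi_inv Vc' by (simp add: divide_inverse)
qed

definition "theta_denom w x = w + deriv U x / (deriv V (w * x) * (U x)\<^sup>2)"

lemma theta_denom_ge:
  assumes "0 < w" "0 < x" "x < xU" "w * x < xV"
  shows "w \<le> theta_denom w x"
  using assms deriv_U_nonneg[of x] deriv_V_pos[of "w * x"] U_pos[of x]
  by (simp add: theta_denom_def)

lemma has_field_derivative_root_weight:
  assumes w0: "0 < w0" and x0: "0 < x0" "x0 < xU" "w0 * x0 < xV"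
    and Vi_x0: "Vi (inverse (Uc (of_real x0))) = of_real (w0 * x0)"
    and Vi': "(Vi has_field_derivative of_real (1 / deriv V (w0 * x0))) (at (inverse (Uc (of_real x0))))"
  shows "((\<lambda>z. Vi (inverse (Uc z)) / z) has_field_derivative of_real (- theta_denom w0 x0 / x0))
    (at (of_real x0))"
proof -
  have U_x0: "Uc (of_real x0) = of_real (U x0)" "Uc (of_real x0) \<noteq> 0"
    using x0 U_pos[of x0] by (auto simp: Uc_of_real)
  have "(Uc has_field_derivative of_real (deriv U x0)) (at (of_real x0))"
    using holomorphic_derivI[OF holomorphic_Uc, of "of_real x0"] x0 by (simp add: deriv_Uc_of_real)
  then have inv': "((\<lambda>z. inverse (Uc z)) has_field_derivative
      - (of_real (deriv U x0) * inverse (Uc (of_real x0) ^ Suc (Suc 0)))) (at (of_real x0))"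
    using U_x0(2) by (rule DERIV_inverse_fun)
  show ?thesis
  proof (rule DERIV_cong[OF DERIV_divide[OF DERIV_chain2[OF Vi' inv'] DERIV_ident]])
    show "(of_real (1 / deriv V (w0 * x0)) * - (of_real (deriv U x0) * inverse (Uc (of_real x0) ^ Suc (Suc 0)))
        * of_real x0 - Vi (inverse (Uc (of_real x0))) * 1) / (of_real x0 * of_real x0)
      = complex_of_real (- theta_denom w0 x0 / x0)"
      using x0 w0 U_x0 Vi_x0 deriv_V_pos[of "w0 * x0"]
      by (simp add: theta_denom_def power2_eq_square field_simps)
  qed (use x0 in simp)
qed

text \<open>On the real axis, \<open>W(x) = V\<^sup>-\<^sup>1(1 / U(x)) / x\<close> is the weight for which \<open>x\<close> is a root.\<close>
lemma root_weight_function: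
  assumes w0: "0 < w0" and x0: "0 < x0" "x0 < xU" "w0 * x0 < xV" and root: "U x0 * V (w0 * x0) = 1"
  obtains S W where "open S" "of_real x0 \<in> S" "W holomorphic_on S"
    "W (of_real x0) = of_real w0"
    "(W has_field_derivative of_real (- theta_denom w0 x0 / x0)) (at (of_real x0))"
    "\<And>z. z \<in> S \<Longrightarrow> cnj z \<in> S \<and> W (cnj z) = cnj (W z)"
    "\<And>z. z \<in> S \<Longrightarrow> 0 < Re z"
    "\<And>x y. of_real x \<in> S \<Longrightarrow> W (of_real x) = of_real y \<Longrightarrow>
       0 < y \<and> 0 < x \<and> x < xU \<and> y * x < xV \<and> U x * V (y * x) = 1"
proof -
  have y0: "0 < w0 * x0" "w0 * x0 < xV" using w0 x0 by auto
  obtain \<epsilon> Vi where "0 < \<epsilon>" and holVi: "Vi holomorphic_on ball (of_real (V (w0 * x0))) \<epsilon>"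
    and Vi_y0: "Vi (of_real (V (w0 * x0))) = of_real (w0 * x0)"
    and Vi': "(Vi has_field_derivative of_real (1 / deriv V (w0 * x0))) (at (of_real (V (w0 * x0))))"
    and Vi_inv: "\<And>s. s \<in> ball (of_real (V (w0 * x0))) \<epsilon> \<Longrightarrow>
       Vc (Vi s) = s \<and> norm (Vi s) < xV \<and> 0 < Re (Vi s) \<and> Vi (cnj s) = cnj (Vi s)"
    using V_local_inverse[OF y0] by blast
  define T :: "complex set" where "T = ball (of_real (V (w0 * x0))) \<epsilon>"
  define B where "B = (ball 0 xU \<inter> {z. 0 < Re z}) \<inter> Uc -` (- {0})"
  define S where "S = B \<inter> (\<lambda>z. inverse (Uc z)) -` T"
  define W where "W z = Vi (inverse (Uc z)) / z" for z
  have S_iff: "z \<in> S \<longleftrightarrow> norm z < xU \<and> 0 < Re z \<and> Uc z \<noteq> 0 \<and> inverse (Uc z) \<in> T" for z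
    by (auto simp: S_def B_def)
  have "V (w0 * x0) = inverse (U x0)"
    using root U_pos[OF x0(1,2)] by (simp add: field_simps)
  then have inv_U_x0: "inverse (Uc (of_real x0)) = of_real (V (w0 * x0))"
    using x0 by (simp add: Uc_of_real of_real_inverse)
  have "open B"
    unfolding B_def using holomorphic_on_imp_continuous_on[OF holomorphic_Uc]
    by (intro continuous_open_preimage open_Int open_halfspace_Re_gt)
      (auto intro: continuous_on_subset)
  moreover have inv_hol: "(\<lambda>z. inverse (Uc z)) holomorphic_on B"
    by (intro holomorphic_intros holomorphic_on_subset[OF holomorphic_Uc]) (auto simp: B_def)
  ultimately have "open S"
    unfolding S_def T_def by (intro continuous_open_preimage holomorphic_on_imp_continuous_on) auto
  moreover have "of_real x0 \<in> S"
    using x0 inv_U_x0 \<open>0 < \<epsilon>\<close> U_pos[OF x0(1,2)] by (auto simp: S_iff T_def Uc_of_real)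
  moreover have "W holomorphic_on S"
  proof -
    have "(Vi \<circ> (\<lambda>z. inverse (Uc z))) holomorphic_on S"
      by (rule holomorphic_on_compose_gen[OF holomorphic_on_subset[OF inv_hol] holVi])
        (auto simp: S_def T_def)
    then show ?thesis
      unfolding W_def[abs_def] by (intro holomorphic_intros) (auto simp: S_iff o_def)
  qed
  moreover have "W (of_real x0) = of_real w0"
    using x0 inv_U_x0 Vi_y0 by (simp add: W_def)
  moreover have "(W has_field_derivative of_real (- theta_denom w0 x0 / x0)) (at (of_real x0))"
    unfolding W_def[abs_def] using w0 x0 Vi_y0 Vi'
    by (intro has_field_derivative_root_weight) (simp_all add: inv_U_x0)
  moreover have "cnj z \<in> S \<and> W (cnj z) = cnj (W z)" if "z \<in> S" for z
    using that Uc_cnj Vi_inv[of "inverse (Uc z)"] cnj_in_ball_of_real_iff[of "inverse (Uc z)"]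
    by (auto simp: S_iff W_def T_def)
  moreover have "0 < Re z" if "z \<in> S" for z
    using that by (simp add: S_iff)
  moreover have "0 < y \<and> 0 < x \<and> x < xU \<and> y * x < xV \<and> U x * V (y * x) = 1"
    if x: "of_real x \<in> S" and y: "W (of_real x) = of_real y" for x y
  proof -
    have x': "0 < x" "x < xU" "U x \<noteq> 0" "inverse (of_real (U x)) \<in> T"
      using x by (auto simp: S_iff Uc_of_real)
    then have "Vi (inverse (of_real (U x))) = of_real (y * x)"
      using y by (simp add: W_def Uc_of_real field_simps)
    with Vi_inv[OF x'(4)[unfolded T_def]] have yx: "\<bar>y * x\<bar> < xV" "0 < y * x"
      and "of_real (V (y * x)) = inverse (of_real (U x) :: complex)"
      by (auto simp: Vc_of_real simp del: of_real_mult)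
    then have "U x * V (y * x) = 1"
      using x' by (metis of_real_eq_iff of_real_inverse right_inverse)
    then show ?thesis
      using x' yx by (auto simp: zero_less_mult_iff)
  qed
  ultimately show ?thesis using that by blast
qed

lemma root_curve:
  assumes w0: "0 < w0" and x0: "0 < x0" "x0 < xU" "w0 * x0 < xV" and root: "U x0 * V (w0 * x0) = 1"
  obtains \<epsilon> X where "0 < \<epsilon>" "X holomorphic_on ball (of_real w0) \<epsilon>" "X (of_real w0) = of_real x0"
    "(X has_field_derivative of_real (- x0 / theta_denom w0 x0)) (at (of_real w0))"
    "\<And>s. s \<in> ball (of_real w0) \<epsilon> \<Longrightarrow> 0 < Re (X s)"
    "\<And>y. \<bar>y - w0\<bar> < \<epsilon> \<Longrightarrow> \<exists>x. X (of_real y) = of_real x \<and>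
       0 < y \<and> 0 < x \<and> x < xU \<and> y * x < xV \<and> U x * V (y * x) = 1"
proof -
  obtain S W where S: "open S" "of_real x0 \<in> S" and holW: "W holomorphic_on S"
    and W_x0: "W (of_real x0) = of_real w0"
    and W': "(W has_field_derivative of_real (- theta_denom w0 x0 / x0)) (at (of_real x0))"
    and W_cnj: "\<And>z. z \<in> S \<Longrightarrow> cnj z \<in> S \<and> W (cnj z) = cnj (W z)"
    and S_Re: "\<And>z. z \<in> S \<Longrightarrow> 0 < Re z"
    and W_root: "\<And>x y. of_real x \<in> S \<Longrightarrow> W (of_real x) = of_real y \<Longrightarrow>
       0 < y \<and> 0 < x \<and> x < xU \<and> y * x < xV \<and> U x * V (y * x) = 1"
    using root_weight_function[OF w0 x0 root] by auto
  have W'_eq: "deriv W (of_real x0) = of_real (- theta_denom w0 x0 / x0)"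
    using W' by (rule DERIV_imp_deriv)
  moreover have "0 < theta_denom w0 x0"
    using theta_denom_ge[OF w0 x0] w0 by linarith
  ultimately have "deriv W (of_real x0) \<noteq> 0"
    using x0 by simp
  then obtain \<epsilon> X where "0 < \<epsilon>" "X holomorphic_on ball (of_real w0) \<epsilon>" "X (of_real w0) = of_real x0"
    and X': "(X has_field_derivative inverse (deriv W (of_real x0))) (at (of_real w0))"
    and X_inv: "\<And>s. s \<in> ball (of_real w0) \<epsilon> \<Longrightarrow> X s \<in> S \<and> W (X s) = s \<and> X (cnj s) = cnj (X s)"
    using holomorphic_local_inverse_real[OF holW S _ W_cnj W_x0] by blast
  moreover have "inverse (deriv W (of_real x0)) = of_real (- x0 / theta_denom w0 x0)"
    by (simp add: W'_eq)
  moreover have "\<exists>x. X (of_real y) = of_real x \<and> 0 < y \<and> 0 < x \<and> x < xU \<and> y * x < xV \<and> U x * V (y * x) = 1"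
    if y: "\<bar>y - w0\<bar> < \<epsilon>" for y
  proof -
    have y_in: "complex_of_real y \<in> ball (of_real w0) \<epsilon>"
      using y by (simp add: dist_norm abs_minus_commute flip: of_real_diff)
    then have "X (of_real y) \<in> \<real>"
      using X_inv[of "of_real y"] by (simp add: Reals_cnj_iff)
    then obtain x where x: "X (of_real y) = of_real x"
      by (auto elim: Reals_cases)
    then show ?thesis
      using X_inv[OF y_in] W_root[of x y] by auto
  qed
  ultimately show ?thesis
    using that S_Re X_inv by (metis X')
qed

lemma free_energy_near_root:
  assumes w0: "0 < w0" and x0: "0 < x0" "x0 < xU" "w0 * x0 < xV" and root: "U x0 * V (w0 * x0) = 1"
  shows "(free_energy b p has_real_derivative 1 / theta_denom w0 x0) (at w0)"
    and "\<exists>r>0. \<exists>a. \<forall>y. \<bar>y - w0\<bar> < r \<longrightarrow> (\<lambda>n. a n * (y - w0) ^ n) sums free_energy b p y"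
proof -
  obtain \<epsilon> X where \<epsilon>: "0 < \<epsilon>" and holX: "X holomorphic_on ball (of_real w0) \<epsilon>"
    and X_w0: "X (of_real w0) = of_real x0"
    and X': "(X has_field_derivative of_real (- x0 / theta_denom w0 x0)) (at (of_real w0))"
    and X_Re: "\<And>s. s \<in> ball (of_real w0) \<epsilon> \<Longrightarrow> 0 < Re (X s)"
    and X_root: "\<And>y. \<bar>y - w0\<bar> < \<epsilon> \<Longrightarrow> \<exists>x. X (of_real y) = of_real x \<and>
       0 < y \<and> 0 < x \<and> x < xU \<and> y * x < xV \<and> U x * V (y * x) = 1"
    using root_curve[OF w0 x0 root] by blast
  define F where "F s = - Ln (X s)" for s
  have X_slit: "X s \<notin> \<real>\<^sub>\<le>\<^sub>0" if "s \<in> ball (of_real w0) \<epsilon>" for s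
    using X_Re[OF that] by (auto simp: complex_nonpos_Reals_iff)
  have "F holomorphic_on ball (of_real w0) \<epsilon>"
    unfolding F_def[abs_def] using holX X_slit by (intro holomorphic_intros) auto
  moreover have "free_energy b p y = Re (F (of_real y))" if y: "\<bar>y - w0\<bar> < \<epsilon>" for y
  proof -
    obtain x where x: "X (of_real y) = of_real x" "0 < y" "0 < x" "x < xU" "y * x < xV"
      "U x * V (y * x) = 1"
      using X_root[OF y] by blast
    then have "x_crit b p y = ereal x"
      by (intro x_crit_root) auto
    then show ?thesis
      using x by (simp add: free_energy_def F_def Ln_of_real)
  qed
  moreover have "(F has_field_derivative of_real (1 / theta_denom w0 x0)) (at (of_real w0))"
  proof -
    have "(Ln has_field_derivative inverse (X (of_real w0))) (at (X (of_real w0)))"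
      using X_w0 x0 by (intro has_field_derivative_Ln) auto
    from DERIV_minus[OF DERIV_chain2[OF this X']] show ?thesis
      using X_w0 x0 theta_denom_ge[OF w0 x0] w0 by (simp add: F_def[abs_def] field_simps)
  qed
  ultimately show "(free_energy b p has_real_derivative 1 / theta_denom w0 x0) (at w0)"
    and "\<exists>r>0. \<exists>a. \<forall>y. \<bar>y - w0\<bar> < r \<longrightarrow> (\<lambda>n. a n * (y - w0) ^ n) sums free_energy b p y"
    using \<epsilon> Re_holomorphic_has_real_derivative Re_holomorphic_power_series by blast+
qed

section \<open>Absence of a phase transition\<close>

lemma free_energy_real_analytic:
  assumes "filterlim U at_top (at_left xU) \<or> (\<exists>L. (U \<longlongrightarrow> L) (at_left xU) \<and> 1 \<le> L * V xU)"
  shows "real_analytic_on (free_energy b p) {1<..}"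
  unfolding real_analytic_on_def
proof
  fix w :: real assume "w \<in> {1<..}"
  then have w: "1 < w" by simp
  obtain x0 where "0 < x0" "x0 < xU" "w * x0 < xV" "U x0 * V (w * x0) = 1"
  proof (rule root_exists)
    assume wxU: "w * xU < xV"
    from assms show "\<exists>x. 0 < x \<and> x < xU \<and> w * x < xV \<and> 1 < U x * V (w * x)"
    proof
      assume "filterlim U at_top (at_left xU)"
      then show ?thesis using exists_gt_1_if_U_diverges wxU w by simp
    next
      assume "\<exists>L. (U \<longlongrightarrow> L) (at_left xU) \<and> 1 \<le> L * V xU"
      then obtain L where L: "(U \<longlongrightarrow> L) (at_left xU)" "1 \<le> L * V xU" by blast
      have "L * V xU < L * V (w * xU)"
        using U_tendsto_limit_pos(1)[OF L(1)] V_strict_mono[of xU "w * xU"] w xU_pos wxU by simp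
      then show ?thesis
        using exists_gt_1_if_U_tendsto[OF _ wxU L(1)] L(2) w by simp
    qed
  qed (use w in simp)
  then show "\<exists>r>0. \<exists>a. \<forall>y. \<bar>y - w\<bar> < r \<longrightarrow> (\<lambda>n. a n * (y - w) ^ n) sums free_energy b p y"
    using w by (intro free_energy_near_root(2)) auto
qed

end

section \<open>The phase transition at \<open>w\<^sub>c\<close>\<close>

locale poland_scheraga_transition = poland_scheraga +
  fixes L wc :: real
  assumes U_tendsto: "(PS_U p \<longlongrightarrow> L) (at_left xU)"
    and wc_gt_1: "1 < wc" and wc_xU: "wc * xU < xV" and L_V_wc: "L * PS_V b (wc * xU) = 1"
begin

lemma L_pos: "0 < L"
  using U_tendsto by (rule U_tendsto_limit_pos)

lemma U_V_less_1_below_wc: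
  assumes w: "0 < w" "w \<le> wc" and x: "0 \<le> x" "x < xU"
  shows "w * x < xV" and "U x * V (w * x) < 1"
proof -
  have wx: "w * x \<le> wc * xU"
    using w x wc_gt_1 by (intro mult_mono) auto
  then show "w * x < xV" using wc_xU by linarith
  have "U x * V (w * x) \<le> U x * V (wc * xU)"
    using w x wx wc_xU by (intro mult_left_mono V_mono U_nonneg) auto
  also have "\<dots> < L * V (wc * xU)"
    using U_tendsto_limit_pos(2)[OF U_tendsto x] wc_gt_1 xU_pos wc_xU V_pos[of "wc * xU"]
    by (intro mult_strict_right_mono) auto
  finally show "U x * V (w * x) < 1" using L_V_wc by simp
qed

lemma x_crit_below:
  assumes "0 < w" "w < wc"
  shows "x_crit b p w = ereal xU"
proof (rule antisym)
  show "x_crit b p w \<le> ereal xU" using assms(1) by (rule x_crit_le_xU)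
  show "ereal xU \<le> x_crit b p w"
    using assms U_V_less_1_below_wc[of w] by (intro x_crit_ge) auto
qed

lemma free_energy_below:
  assumes "0 < w" "w < wc"
  shows "(free_energy b p has_real_derivative 0) (at w)"
proof (rule has_field_derivative_transform_within_open)
  show "((\<lambda>_. - ln xU) has_real_derivative 0) (at w)" by (rule DERIV_const)
  show "- ln xU = free_energy b p y" if "y \<in> {0<..<wc}" for y
    using x_crit_below[of y] that by (simp add: free_energy_def)
qed (use assms in auto)

definition "x_root w = real_of_ereal (x_crit b p w)"

lemma x_root_above:
  assumes w: "wc < w"
  shows "0 < x_root w" "x_root w < xU" "w * x_root w < xV" "U (x_root w) * V (w * x_root w) = 1"
proof -
  have w0: "0 < w" using w wc_gt_1 by simp
  obtain x0 where x0: "0 < x0" "x0 < xU" "w * x0 < xV" "U x0 * V (w * x0) = 1"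
  proof (rule root_exists[OF w0])
    assume wxU: "w * xU < xV"
    have "L * V (wc * xU) < L * V (w * xU)"
      using L_pos V_strict_mono[of "wc * xU" "w * xU"] w wc_gt_1 xU_pos wxU by simp
    then show "\<exists>x. 0 < x \<and> x < xU \<and> w * x < xV \<and> 1 < U x * V (w * x)"
      using exists_gt_1_if_U_tendsto[OF w0 wxU U_tendsto] L_V_wc by simp
  qed
  moreover have "x_root w = x0"
    using x_crit_root[OF w0 x0] by (simp add: x_root_def)
  ultimately show "0 < x_root w" "x_root w < xU" "w * x_root w < xV"
    "U (x_root w) * V (w * x_root w) = 1" by simp_all
qed

lemma free_energy_above:
  assumes "wc < w"
  shows "(free_energy b p has_real_derivative 1 / theta_denom w (x_root w)) (at w)"
  using assms wc_gt_1 x_root_above[OF assms] by (intro free_energy_near_root(1)) auto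

lemma theta_above:
  assumes "wc < w"
  shows "theta b p w = w / theta_denom w (x_root w)"
  using DERIV_imp_deriv[OF free_energy_above[OF assms]] by (simp add: theta_def)

lemma eventually_x_root_gt:
  assumes "a < xU"
  shows "eventually (\<lambda>w. a < x_root w) (at_right wc)"
proof -
  define a' where "a' = max a (xU / 2)"
  have a': "0 < a'" "a' < xU" "a \<le> a'"
    using assms xU_pos by (auto simp: a'_def)
  have "\<bar>wc * a'\<bar> < xV"
    using U_V_less_1_below_wc(1)[of wc a'] a' wc_gt_1 by simp
  then have "((\<lambda>w. U a' * V (w * a')) \<longlongrightarrow> U a' * V (wc * a')) (at_right wc)"
    by (intro tendsto_intros isCont_tendsto_compose[OF isCont_V])
  moreover have "U a' * V (wc * a') < 1"
    using U_V_less_1_below_wc(2)[of wc a'] a' wc_gt_1 by simp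
  ultimately have "eventually (\<lambda>w. U a' * V (w * a') < 1) (at_right wc)"
    by (rule order_tendstoD)
  moreover have "((\<lambda>w. w * xU) \<longlongrightarrow> wc * xU) (at_right wc)"
    by (intro tendsto_intros)
  then have "eventually (\<lambda>w. w * xU < xV) (at_right wc)"
    using wc_xU by (rule order_tendstoD)
  ultimately show ?thesis
    using eventually_at_right_less
  proof eventually_elim
    case (elim w)
    have w: "0 < w" using elim wc_gt_1 by simp
    then have "w * a' < w * xU" using a' by simp
    then have wa': "w * a' < xV" using elim by linarith
    show "a < x_root w"
    proof (rule ccontr)
      assume "\<not> a < x_root w"
      then have "x_root w \<le> a'" using a' by simp
      then have "U (x_root w) * V (w * x_root w) \<le> U a' * V (w * a')"
        using x_root_above[OF elim(3)] w wa' a'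
        by (intro mult_mono U_mono V_mono U_nonneg V_nonneg mult_left_mono) auto
      then show False
        using x_root_above(4)[OF elim(3)] elim(1) by simp
    qed
  qed
qed

lemma x_root_tendsto: "filterlim x_root (at_left xU) (at_right wc)"
proof (rule filterlim_at_withinI)
  show "eventually (\<lambda>w. x_root w \<in> {..<xU} - {xU}) (at_right wc)"
    using eventually_at_right_less by eventually_elim (use x_root_above(2) in auto)
  show "(x_root \<longlongrightarrow> xU) (at_right wc)"
  proof (rule order_tendstoI)
    fix a assume a: "xU < a"
    show "eventually (\<lambda>w. x_root w < a) (at_right wc)"
      using eventually_at_right_less by eventually_elim (use a x_root_above(2) in force)
  qed (rule eventually_x_root_gt)
qed

lemma theta_above_pos:
  assumes "wc < w"
  shows "0 < theta b p w"
  using assms wc_gt_1 theta_denom_ge[of w "x_root w"] x_root_above[OF assms]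
  by (simp add: theta_above)

lemma deriv_V_U_sq_tendsto:
  "((\<lambda>w. deriv V (w * x_root w) * (U (x_root w))\<^sup>2) \<longlongrightarrow> deriv V (wc * xU) * L\<^sup>2) (at_right wc)"
proof -
  have "(x_root \<longlongrightarrow> xU) (at_right wc)"
    using filterlim_mono[OF x_root_tendsto at_within_le_nhds order_refl] .
  then have "((\<lambda>w. w * x_root w) \<longlongrightarrow> wc * xU) (at_right wc)"
    by (intro tendsto_intros)
  moreover have "\<bar>wc * xU\<bar> < xV"
    using wc_gt_1 xU_pos wc_xU by simp
  ultimately have "((\<lambda>w. deriv V (w * x_root w)) \<longlongrightarrow> deriv V (wc * xU)) (at_right wc)"
    by (intro isCont_tendsto_compose[OF isCont_deriv_V])
  moreover have "((\<lambda>w. U (x_root w)) \<longlongrightarrow> L) (at_right wc)"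
    using filterlim_compose[OF U_tendsto x_root_tendsto] .
  ultimately show ?thesis
    by (intro tendsto_intros)
qed

lemma deriv_V_U_sq_limit_pos: "0 < deriv V (wc * xU) * L\<^sup>2"
  using deriv_V_pos[of "wc * xU"] wc_gt_1 xU_pos wc_xU L_pos by simp

lemma theta_eventually_eq:
  "eventually (\<lambda>w. w / (w + deriv U (x_root w) / (deriv V (w * x_root w) * (U (x_root w))\<^sup>2))
     = theta b p w) (at_right wc)"
  using eventually_at_right_less by eventually_elim (simp add: theta_above theta_denom_def)

lemma theta_tendsto_0:
  assumes "filterlim (deriv U) at_top (at_left xU)"
  shows "(theta b p \<longlongrightarrow> 0) (at_right wc)"
proof -
  define Q where "Q w = deriv V (w * x_root w) * (U (x_root w))\<^sup>2" for w
  have Q_inv: "((\<lambda>w. 1 / Q w) \<longlongrightarrow> 1 / (deriv V (wc * xU) * L\<^sup>2)) (at_right wc)"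
    unfolding Q_def using deriv_V_U_sq_limit_pos
    by (intro tendsto_divide[OF tendsto_const deriv_V_U_sq_tendsto]) linarith
  have "filterlim (\<lambda>w. 1 / Q w * deriv U (x_root w)) at_top (at_right wc)"
    using deriv_V_U_sq_limit_pos
    by (intro filterlim_tendsto_pos_mult_at_top[OF Q_inv _ filterlim_compose[OF assms x_root_tendsto]])
      simp
  then have "filterlim (\<lambda>w. w + deriv U (x_root w) / Q w) at_top (at_right wc)"
    by (intro filterlim_tendsto_add_at_top[OF tendsto_ident_at]) simp
  then have "((\<lambda>w. w / (w + deriv U (x_root w) / Q w)) \<longlongrightarrow> 0) (at_right wc)"
    by (intro tendsto_divide_0[OF tendsto_ident_at] filterlim_at_top_imp_at_infinity)
  then show ?thesis
    using theta_eventually_eq unfolding Q_def by (rule Lim_transform_eventually)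
qed

lemma theta_tendsto_pos:
  assumes D: "(deriv U \<longlongrightarrow> D) (at_left xU)"
  defines "\<theta>c \<equiv> wc / (wc + D / (deriv V (wc * xU) * L\<^sup>2))"
  shows "(theta b p \<longlongrightarrow> \<theta>c) (at_right wc)" and "0 < \<theta>c"
proof -
  have "eventually (\<lambda>x. 0 \<le> deriv U x) (at_left xU)"
    using eventually_at_left_real[OF xU_pos] by eventually_elim (auto intro: deriv_U_nonneg)
  then have "0 \<le> D"
    by (intro tendsto_lowerbound[OF D]) simp_all
  then show "0 < \<theta>c"
    using deriv_V_U_sq_limit_pos wc_gt_1 by (simp add: \<theta>c_def add_pos_nonneg)
  then have "((\<lambda>w. w / (w + deriv U (x_root w) / (deriv V (w * x_root w) * (U (x_root w))\<^sup>2)))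
      \<longlongrightarrow> \<theta>c) (at_right wc)"
    unfolding \<theta>c_def using deriv_V_U_sq_limit_pos
    by (intro tendsto_divide tendsto_add tendsto_ident_at filterlim_compose[OF D x_root_tendsto]
        deriv_V_U_sq_tendsto) auto
  then show "(theta b p \<longlongrightarrow> \<theta>c) (at_right wc)"
    using theta_eventually_eq by (rule Lim_transform_eventually)
qed

lemma free_energy_differentiable_theta_below:
  assumes "1 < w" "w < wc"
  shows "free_energy b p differentiable at w \<and> theta b p w = 0"
  using free_energy_below[of w] assms
  by (auto simp: theta_def DERIV_imp_deriv has_field_derivative_def intro: differentiableI)

lemma free_energy_differentiable_theta_above:
  assumes "wc < w"
  shows "free_energy b p differentiable at w \<and> 0 < theta b p w"
  using free_energy_above[OF assms] theta_above_pos[OF assms]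
  by (auto simp: has_field_derivative_def intro: differentiableI)

end

theorem theorem2:
  fixes b p :: "nat \<Rightarrow> nat" and xU xV :: real
  assumes p_nonzero: "\<exists>n\<ge>1. p n \<noteq> 0"
    and radV: "conv_radius (\<lambda>n. real (b n)) = ereal xV"
    and radU: "conv_radius (U_coeff p) = ereal xU"
    and "0 < xU" and "xU < xV" and "xV \<le> 1"
    and V_blowup: "filterlim (PS_V b) at_top (at_left xV)"
  shows "((filterlim (PS_U p) at_top (at_left xU)
           \<or> (\<exists>L. (PS_U p \<longlongrightarrow> L) (at_left xU) \<and> L * PS_V b xU \<ge> 1))
         \<longrightarrow> real_analytic_on (free_energy b p) {1<..})
    \<and> (\<forall>L wc. (PS_U p \<longlongrightarrow> L) (at_left xU) \<and> L * PS_V b xU < 1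
             \<and> 1 < wc \<and> wc * xU < xV \<and> L * PS_V b (wc * xU) = 1 \<longrightarrow>
           (\<forall>w. 1 < w \<and> w < wc \<longrightarrow> free_energy b p differentiable at w \<and> theta b p w = 0)
         \<and> (\<forall>w. wc < w \<longrightarrow> free_energy b p differentiable at w \<and> theta b p w > 0)
         \<and> (filterlim (deriv (PS_U p)) at_top (at_left xU)
              \<longrightarrow> (theta b p \<longlongrightarrow> 0) (at_right wc))
         \<and> ((\<exists>D. (deriv (PS_U p) \<longlongrightarrow> D) (at_left xU))
              \<longrightarrow> (\<exists>\<theta>c>0. (theta b p \<longlongrightarrow> \<theta>c) (at_right wc))))"
proof -
  interpret poland_scheraga b p xU xV
    using assms by unfold_locales
  have transition: "(\<forall>w. 1 < w \<and> w < wc \<longrightarrow> free_energy b p differentiable at w \<and> theta b p w = 0)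
         \<and> (\<forall>w. wc < w \<longrightarrow> free_energy b p differentiable at w \<and> theta b p w > 0)
         \<and> (filterlim (deriv (PS_U p)) at_top (at_left xU) \<longrightarrow> (theta b p \<longlongrightarrow> 0) (at_right wc))
         \<and> ((\<exists>D. (deriv (PS_U p) \<longlongrightarrow> D) (at_left xU))
              \<longrightarrow> (\<exists>\<theta>c>0. (theta b p \<longlongrightarrow> \<theta>c) (at_right wc)))"
    if "(PS_U p \<longlongrightarrow> L) (at_left xU)" "1 < wc" "wc * xU < xV" "L * PS_V b (wc * xU) = 1" for L wc
  proof -
    interpret poland_scheraga_transition b p xU xV L wc
      using that by unfold_locales
    show ?thesis
      using free_energy_differentiable_theta_below free_energy_differentiable_theta_above
        theta_tendsto_0 theta_tendsto_pos by blast
  qed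
  show ?thesis
    using free_energy_real_analytic transition by blast
qed

end
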